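(* Let $\mathcal{M}\subseteq\mathbb{N}_0$ and let $k=\min(\mathcal{M})$ if $\mathcal{M}\ne\varnothing$ and $k=0$ otherwise. Then $\lim_{i\to\infty}\mathcal{M}^i=\mathcal{M}_k$, where $\mathcal{M}_0=\varnothing$ and, for $k\ge1$, $\mathcal{M}_k=\{ip_k+j:\ i\in\mathbb{N}_0,\ k\le j\le 2k-1\}$ with $p_k=3k-1$.
   Context: A one-heap game is a set $\mathcal{M}\subseteq\mathbb{N}_0$ of moves; from position $x\in\mathbb{N}_0$ one may move to $y\in\mathbb{N}_0$ iff $x-y\in\mathcal{M}$. Misère play: a player who cannot move wins. If $0\in\mathcal{M}$, $P(\mathcal{M})=\varnothing$. Otherwise: a position is an N-position if it has no option or some option is a P-position; otherwise it is a P-position; $P(\mathcal{M})$ denotes the set of P-positions. $\mathcal{M}^\star=P(\mathcal{M})$, $\mathcal{M}^0=\mathcal{M}$, $\mathcal{M}^i=(\mathcal{M}^{i-1})^\star$, and $\lim_i\mathcal{M}^i$ is the pointwise limit: the set of $x$ with $x\in\mathcal{M}^i$ for all sufficiently large $i$, where every $x$ is eventually always in or eventually always out of $\mathcal{M}^i$. *)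

theory Defs
  imports Main
begin

text \<open>Misere one-heap game with move set M.\<close>

function isP :: "nat set \<Rightarrow> nat \<Rightarrow> bool" where
  "isP M x = ((\<exists>m\<in>M. m \<le> x) \<and>
              (\<forall>m. m \<in> M \<and> 0 < m \<and> m \<le> x \<longrightarrow> \<not> isP M (x - m)))"
  by auto
termination by (relation "measure snd") auto

declare isP.simps [simp del]

definition Ppos :: "nat set \<Rightarrow> nat set" where
  "Ppos M = (if 0 \<in> M then {} else {x. isP M x})"

definition iterM :: "nat set \<Rightarrow> nat \<Rightarrow> nat set" where
  "iterM M i = (Ppos ^^ i) M"

definition is_pointwise_limit :: "(nat \<Rightarrow> nat set) \<Rightarrow> nat set \<Rightarrow> bool" where
  "is_pointwise_limit S L = (\<forall>x. \<exists>i0. \<forall>i\<ge>i0. (x \<in> S i \<longleftrightarrow> x \<in> L))"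

definition minmove :: "nat set \<Rightarrow> nat" where
  "minmove M = (if M = {} then 0 else (LEAST m. m \<in> M))"

definition Mk :: "nat \<Rightarrow> nat set" where
  "Mk k = (if k = 0 then {} else
      {i * (3 * k - 1) + j | i j. k \<le> j \<and> j \<le> 2 * k - 1})"

end

theory Submission
  imports Defs
begin

text \<open>Whether x is a P-position depends only on the moves of size at most x - k, where k is
the least move: smaller positions are N-positions for every move set with least move k.
Hence if two move sets with least move k agree up to n, their P-position sets agree up to
n + k, so every application of Ppos extends the agreement with a fixed point by k.
For k \<ge> 1 the set Mk k is such a fixed point: writing p = 3k - 1, its elements are
the numbers whose residue mod p lies in [k, 2k), so it is sum-free modulo p, while every
x \<ge> k outside it is the sum of two of its elements.  If 0 is a move or there is no move,
every position is an N-position after one step.\<close>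

definition least_elem :: "nat set \<Rightarrow> nat \<Rightarrow> bool" where
  "least_elem S k \<longleftrightarrow> k \<in> S \<and> (\<forall>y<k. y \<notin> S)"

lemma least_elem_minmove:
  assumes "M \<noteq> {}"
  shows "least_elem M (minmove M)"
proof -
  obtain m where "m \<in> M" using assms by blast
  then show ?thesis
    using assms unfolding least_elem_def minmove_def by (auto intro: LeastI dest: not_less_Least)
qed

lemma not_isP_below_least:
  assumes "\<forall>y<k. y \<notin> S" "x < k"
  shows "\<not> isP S x"
  using assms by (subst isP.simps) auto

lemma isP_least:
  assumes "least_elem S k" "1 \<le> k"
  shows "isP S k"
proof (subst isP.simps, intro conjI allI impI)
  show "\<exists>m\<in>S. m \<le> k" using assms(1) unfolding least_elem_def by blast
next
  fix m assume m: "m \<in> S \<and> 0 < m \<and> m \<le> k"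
  then have "k - m < k" using assms(2) by simp
  then show "\<not> isP S (k - m)"
    using assms(1) not_isP_below_least unfolding least_elem_def by blast
qed

lemma least_elem_Ppos:
  assumes "least_elem S k" "1 \<le> k"
  shows "least_elem (Ppos S) k"
proof -
  have "0 \<notin> S" using assms unfolding least_elem_def by auto
  then show ?thesis
    using assms isP_least not_isP_below_least
    unfolding least_elem_def Ppos_def by auto
qed

lemma isP_cong_prefix:
  assumes S: "least_elem S k" and T: "least_elem T k" and "1 \<le> k"
    and agree: "S \<inter> {..n} = T \<inter> {..n}" and "x \<le> n + k"
  shows "isP S x = isP T x"
  using \<open>x \<le> n + k\<close>
proof (induction x rule: less_induct)
  case (less x)
  have below: "\<forall>y<k. y \<notin> S" "\<forall>y<k. y \<notin> T" using S T unfolding least_elem_def by auto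
  show ?case
  proof (cases "x < k")
    case True
    then show ?thesis using not_isP_below_least below by blast
  next
    case False
    have has_move: "\<exists>m\<in>S. m \<le> x" "\<exists>m\<in>T. m \<le> x"
      using False S T unfolding least_elem_def by (auto simp: not_less)
    have option_eq: "(m \<in> S \<and> 0 < m \<and> m \<le> x \<longrightarrow> \<not> isP S (x - m)) \<longleftrightarrow>
                     (m \<in> T \<and> 0 < m \<and> m \<le> x \<longrightarrow> \<not> isP T (x - m))" for m
    proof (cases "0 < m \<and> m \<le> x \<and> k \<le> x - m")
      case True
      then have "m \<le> n" using less.prems by linarith
      then have "m \<in> S \<longleftrightarrow> m \<in> T" using agree by blast
      moreover have "isP S (x - m) = isP T (x - m)"
        using True less.prems by (intro less.IH) auto
      ultimately show ?thesis by blast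
    next
      case False
      then show ?thesis using not_isP_below_least below by (metis not_le)
    qed
    show ?thesis
      by (subst (1 2) isP.simps) (use has_move option_eq in blast)
  qed
qed

lemma Ppos_cong_prefix:
  assumes "least_elem S k" "least_elem T k" "1 \<le> k" "S \<inter> {..n} = T \<inter> {..n}"
  shows "Ppos S \<inter> {..n + k} = Ppos T \<inter> {..n + k}"
proof -
  have "0 \<notin> S" "0 \<notin> T" using assms unfolding least_elem_def by auto
  then show ?thesis
    using isP_cong_prefix[OF assms] unfolding Ppos_def by auto
qed

lemma funpow_Ppos_prefix:
  assumes S: "least_elem S k" and T: "least_elem T k" and "1 \<le> k" and fixed: "Ppos T = T"
  shows "least_elem ((Ppos ^^ i) S) k \<and>
         (Ppos ^^ i) S \<inter> {..(i + 1) * k} = T \<inter> {..(i + 1) * k}"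
proof (induction i)
  case 0
  have "S \<inter> {..k} = T \<inter> {..k}"
    using S T unfolding least_elem_def by (auto simp: le_less)
  then show ?case using S by simp
next
  case (Suc i)
  then have "Ppos ((Ppos ^^ i) S) \<inter> {..(i + 1) * k + k} = Ppos T \<inter> {..(i + 1) * k + k}"
    using T \<open>1 \<le> k\<close> by (intro Ppos_cong_prefix) auto
  then show ?case
    using Suc least_elem_Ppos \<open>1 \<le> k\<close> fixed by (simp add: add.commute)
qed

lemma mem_Mk_iff_mod:
  assumes "1 \<le> k"
  shows "x \<in> Mk k \<longleftrightarrow> k \<le> x mod (3 * k - 1) \<and> x mod (3 * k - 1) < 2 * k"
proof
  assume "x \<in> Mk k"
  then obtain i j where "x = i * (3 * k - 1) + j" "k \<le> j" "j \<le> 2 * k - 1"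
    using assms unfolding Mk_def by auto
  moreover have "j < 3 * k - 1" using calculation assms by linarith
  ultimately show "k \<le> x mod (3 * k - 1) \<and> x mod (3 * k - 1) < 2 * k"
    by simp
next
  assume residue: "k \<le> x mod (3 * k - 1) \<and> x mod (3 * k - 1) < 2 * k"
  have "x = x div (3 * k - 1) * (3 * k - 1) + x mod (3 * k - 1)"
    by (rule div_mult_mod_eq[symmetric])
  moreover have "x mod (3 * k - 1) \<le> 2 * k - 1" using residue by linarith
  ultimately have "x \<in> {i * (3 * k - 1) + j | i j. k \<le> j \<and> j \<le> 2 * k - 1}"
    using residue by blast
  then show "x \<in> Mk k" using assms unfolding Mk_def by simp
qed

lemma least_elem_Mk:
  assumes "1 \<le> k"
  shows "least_elem (Mk k) k"
  using assms unfolding least_elem_def mem_Mk_iff_mod[OF assms] by auto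

lemma Mk_sum_free:
  assumes "1 \<le> k" "a \<in> Mk k" "b \<in> Mk k"
  shows "a + b \<notin> Mk k"
proof -
  define p where "p = 3 * k - 1"
  have p: "p + 1 = 3 * k" using assms(1) p_def by simp
  have mem: "y \<in> Mk k \<longleftrightarrow> k \<le> y mod p \<and> y mod p < 2 * k" for y
    unfolding p_def by (rule mem_Mk_iff_mod[OF assms(1)])
  define s where "s = a mod p + b mod p"
  have s: "2 * k \<le> s" "s < 4 * k - 1" and sum: "(a + b) mod p = s mod p"
    using assms(2,3) unfolding mem s_def by (auto simp: mod_add_eq)
  show ?thesis
  proof (cases "s < p")
    case True
    then show ?thesis using s sum mem by simp
  next
    case False
    \<comment> \<open>s < 2p, so the residue wraps around to s - p < k\<close>
    then have "s mod p = s - p" using s p by (simp add: le_mod_geq not_less)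
    then show ?thesis using s sum mem p by simp
  qed
qed

lemma Mk_sum_cover:
  assumes "1 \<le> k" "k \<le> x" "x \<notin> Mk k"
  obtains a where "a \<in> Mk k" "a \<le> x" "x - a \<in> Mk k"
proof -
  define p where "p = 3 * k - 1"
  have p: "p + 1 = 3 * k" using assms(1) p_def by simp
  have mem: "y \<in> Mk k \<longleftrightarrow> k \<le> y mod p \<and> y mod p < 2 * k" for y
    unfolding p_def by (rule mem_Mk_iff_mod[OF assms(1)])
  define q r where "q = x div p" and "r = x mod p"
  have "0 < p" using p assms(1) by linarith
  then have x: "x = q * p + r" and "r < p" unfolding q_def r_def by simp_all
  have "k < p" "2 * k - 1 < p" using p assms(1) by linarith+
  then have k_in: "k \<in> Mk k" and top_in: "2 * k - 1 \<in> Mk k"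
    using assms(1) unfolding mem by auto
  have "r < k \<or> 2 * k \<le> r" using assms(3) unfolding mem r_def by auto
  then show ?thesis
  proof
    assume r: "r < k"
    then obtain q' where q': "q = Suc q'" using assms(2) x by (cases q) auto
    \<comment> \<open>removing 2k - 1 = p - k shifts the residue from r up to r + k\<close>
    have "x - (2 * k - 1) = q' * p + (r + k)" using x q' p r by simp
    moreover have "(q' * p + (r + k)) mod p = r + k" using r p by simp
    ultimately have "x - (2 * k - 1) \<in> Mk k" using r unfolding mem by simp
    moreover have "2 * k - 1 \<le> x" using x q' p by simp
    ultimately show ?thesis using that top_in by blast
  next
    assume r: "2 * k \<le> r"
    have "x - k = q * p + (r - k)" using x r by simp
    then have "(x - k) mod p = r - k" using \<open>r < p\<close> by (simp only: mod_mult_self3) simp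
    then have "x - k \<in> Mk k" using r p \<open>r < p\<close> unfolding mem by linarith
    then show ?thesis using that k_in assms(2) by blast
  qed
qed

lemma isP_Mk:
  assumes "1 \<le> k"
  shows "isP (Mk k) x \<longleftrightarrow> x \<in> Mk k"
proof (induction x rule: less_induct)
  case (less x)
  have below: "\<forall>y<k. y \<notin> Mk k" and k_in: "k \<in> Mk k"
    using least_elem_Mk[OF assms] unfolding least_elem_def by auto
  have no_zero: "0 \<notin> Mk k" using below assms by auto
  show ?case
  proof (cases "x < k")
    case True
    then show ?thesis using not_isP_below_least below by blast
  next
    case False
    then have has_move: "\<exists>m\<in>Mk k. m \<le> x" using k_in by (auto simp: not_less)
    show ?thesis
    proof (cases "x \<in> Mk k")
      case True
      have "\<not> isP (Mk k) (x - m)" if "m \<in> Mk k" "0 < m" "m \<le> x" for m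
        using Mk_sum_free[OF assms that(1), of "x - m"] True that less.IH by auto
      then show ?thesis using True has_move by (subst isP.simps) blast
    next
      case False
      obtain a where "a \<in> Mk k" "a \<le> x" "x - a \<in> Mk k"
        using Mk_sum_cover[OF assms] \<open>\<not> x < k\<close> False by (metis not_less)
      moreover have "0 < a" using calculation no_zero by (cases a) auto
      ultimately have "\<not> isP (Mk k) x"
        using less.IH[of "x - a"] by (subst isP.simps) auto
      then show ?thesis using False by blast
    qed
  qed
qed

lemma Ppos_Mk:
  assumes "1 \<le> k"
  shows "Ppos (Mk k) = Mk k"
proof -
  have "0 \<notin> Mk k" using least_elem_Mk[OF assms] assms unfolding least_elem_def by auto
  then show ?thesis using isP_Mk[OF assms] unfolding Ppos_def by auto
qed

lemma Ppos_empty: "Ppos {} = {}"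
proof -
  have "\<not> isP {} x" for x by (subst isP.simps) simp
  then show ?thesis unfolding Ppos_def by simp
qed

lemma iterM_Suc_degenerate:
  assumes "M = {} \<or> 0 \<in> M"
  shows "iterM M (Suc i) = {}"
proof (induction i)
  case 0
  show ?case using assms Ppos_empty unfolding iterM_def Ppos_def by auto
next
  case (Suc i)
  then show ?case using Ppos_empty unfolding iterM_def by simp
qed

theorem corollary7:
  fixes M :: "nat set"
  shows "is_pointwise_limit (iterM M) (Mk (minmove M))"
proof (cases "M = {} \<or> 0 \<in> M")
  case True
  then have "minmove M = 0" unfolding minmove_def by (auto intro: Least_eq_0)
  then have "Mk (minmove M) = {}" unfolding Mk_def by simp
  then show ?thesis
    using iterM_Suc_degenerate[OF True] unfolding is_pointwise_limit_def
    by (metis Suc_le_D empty_iff)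
next
  case False
  define k where "k = minmove M"
  have M: "least_elem M k" using False least_elem_minmove k_def by blast
  then have "1 \<le> k" using False unfolding least_elem_def by (cases k) auto
  have "x \<in> iterM M i \<longleftrightarrow> x \<in> Mk k" if "x \<le> i" for x i
  proof -
    have "x \<le> i * k" using that \<open>1 \<le> k\<close> by (metis le_trans mult_le_mono2 mult_1_right)
    then have "x \<le> (i + 1) * k" by simp
    then show ?thesis
      using funpow_Ppos_prefix[OF M least_elem_Mk[OF \<open>1 \<le> k\<close>] \<open>1 \<le> k\<close> Ppos_Mk[OF \<open>1 \<le> k\<close>]]
      unfolding iterM_def by blast
  qed
  then show ?thesis unfolding is_pointwise_limit_def k_def by blast
qed

end
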